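(* Let $\mathbb{F}$ be a field of characteristic $2$ with at least $4$ elements, and let $B\in M_4(\mathbb{F})$ be a non-derogative matrix. (a) If $\operatorname{Trace}(B)=u_3\neq 0$, then for every $a\in\mathbb{F}$ with $a\neq 0$ and $a\neq u_3$, there exist $N,D\in M_4(\mathbb{F})$ with $B=N+D$, $N^2=0$, and $D$ diagonalizable with every eigenvalue in $\{0,\ a,\ u_3+a\}$. (b) If $\operatorname{Trace}(B)=0$, then for every $a\in\mathbb{F}$ with $a\neq 0,1$, there exist $N,D\in M_4(\mathbb{F})$ with $B=N+D$, $N^2=0$, and $D$ diagonalizable with eigenvalues $0,1,a,a+1$.
   Context: A square matrix is non-derogative if its minimal polynomial equals its characteristic polynomial. A matrix $D\in M_n(\mathbb{F})$ is diagonalizable if there exists an invertible $U\in M_n(\mathbb{F})$ such that $U^{-1}DU$ is diagonal. *)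

theory Defs
  imports "Jordan_Normal_Form.Matrix" "Jordan_Normal_Form.Char_Poly"
begin

definition mat_trace :: "'a :: comm_ring_1 mat \<Rightarrow> 'a" where
  "mat_trace A = (\<Sum>i<dim_row A. A $$ (i, i))"

definition poly_mat :: "'a :: comm_ring_1 poly \<Rightarrow> 'a mat \<Rightarrow> 'a mat" where
  "poly_mat p A = foldr (\<lambda>c M. M * A + c \<cdot>\<^sub>m 1\<^sub>m (dim_row A)) (coeffs p)
                        (0\<^sub>m (dim_row A) (dim_row A))"

definition minimal_poly :: "'a :: field mat \<Rightarrow> 'a poly" where
  "minimal_poly A = (THE p. monic p \<and> poly_mat p A = 0\<^sub>m (dim_row A) (dim_row A) \<and>
      (\<forall>q. poly_mat q A = 0\<^sub>m (dim_row A) (dim_row A) \<longrightarrow> p dvd q))"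

definition non_derogative :: "'a :: field mat \<Rightarrow> bool" where
  "non_derogative A \<longleftrightarrow> minimal_poly A = char_poly A"

definition diagonalizable :: "'a :: field mat \<Rightarrow> bool" where
  "diagonalizable D \<longleftrightarrow> (\<exists>U V. U \<in> carrier_mat (dim_row D) (dim_row D) \<and>
      V \<in> carrier_mat (dim_row D) (dim_row D) \<and>
      U * V = 1\<^sub>m (dim_row D) \<and> V * U = 1\<^sub>m (dim_row D) \<and> diagonal_mat (V * D * U))"

end

theory Submission
  imports Defs
begin

(*
  A non-derogative matrix B is similar to a companion matrix.  Among all vectors u pick one whose
  local minimal polynomial m (the monic generator of the ideal of polynomials q with q(B) u = 0)
  has maximal degree.  A conductor argument shows that m annihilates every vector, so m(B) = 0 and
  deg m = 4 because the minimal polynomial is the characteristic one.  Hence u, Bu, B^2 u, B^3 u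
  is a basis, in which B becomes the companion matrix C with last column c, and trace B = c_3.

  It remains to write C, up to similarity, as N + D with N^2 = 0 and D similar to a diagonal
  matrix with the prescribed eigenvalues.  If c_3 = 0, take for D the companion matrix of
  x (x + 1) (x + a) (x + a + 1), whose trace vanishes in characteristic 2: then N = C - D is
  supported in the last column above the diagonal, so N^2 = 0, and the Vandermonde matrix of
  0, 1, a, a + 1 diagonalises D.  If c_3 <> 0, an explicit change of basis turns C into N + D with
  D of rank 2 and eigenvalues 0, 0, a, c_3 + a.
*)

section \<open>Ideals of polynomials over a field\<close>

lemma monic_dvd_degree_le_imp_eq:
  fixes p q :: "'a::field poly"
  assumes "monic p" "monic q" "p dvd q" "degree q \<le> degree p"
  shows "p = q"
proof -
  from \<open>p dvd q\<close> obtain k where k: "q = p * k" ..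
  with \<open>monic q\<close> have "k \<noteq> 0" "p \<noteq> 0" by auto
  with assms k have "degree k = 0" by (simp add: degree_mult_eq)
  moreover have "monic k" using assms k by (simp add: lead_coeff_mult)
  ultimately have "k = 1" by (simp add: monic_degree_0)
  with k show ?thesis by simp
qed

lemma poly_ideal_monic_generator:
  fixes I :: "'a::field poly set"
  assumes add_closed: "\<And>p q. p \<in> I \<Longrightarrow> q \<in> I \<Longrightarrow> p + q \<in> I"
    and mult_closed: "\<And>p q. q \<in> I \<Longrightarrow> p * q \<in> I"
    and "q0 \<in> I" "q0 \<noteq> 0"
  shows "\<exists>m. monic m \<and> m \<in> I \<and> (\<forall>q\<in>I. m dvd q)"
proof -
  obtain p where p: "p \<in> I" "p \<noteq> 0" and least: "\<And>r. r \<in> I \<Longrightarrow> r \<noteq> 0 \<Longrightarrow> degree p \<le> degree r"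
    using ex_has_least_nat[of "\<lambda>r. r \<in> I \<and> r \<noteq> 0" q0 degree] assms(3,4) by blast
  define m where "m = Polynomial.smult (inverse (lead_coeff p)) p"
  have "m \<in> I" using mult_closed[OF p(1), of "[:inverse (lead_coeff p):]"] by (simp add: m_def)
  moreover have "monic m" "degree m = degree p" using p(2) by (simp_all add: m_def)
  moreover have "m dvd q" if "q \<in> I" for q
  proof (rule ccontr)
    assume "\<not> m dvd q"
    then have r0: "q mod m \<noteq> 0" by (simp add: dvd_eq_mod_eq_0)
    have "q mod m = q + (- (q div m)) * m" using minus_div_mult_eq_mod[of q m] by simp
    then have "q mod m \<in> I" using \<open>m \<in> I\<close> that by (metis add_closed mult_closed)
    with least r0 have "degree m \<le> degree (q mod m)" using \<open>degree m = degree p\<close> by simp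
    moreover have "degree (q mod m) < degree m"
      using \<open>\<not> m dvd q\<close> \<open>monic m\<close> by (intro degree_mod_less_degree) auto
    ultimately show False by simp
  qed
  ultimately show ?thesis by blast
qed

context
  fixes A :: "'a::comm_ring_1 mat" and n :: nat
  assumes A: "A \<in> carrier_mat n n"
begin

lemma poly_mat_carrier [simp]: "poly_mat p A \<in> carrier_mat n n"
proof -
  have "foldr (\<lambda>c M. M * A + c \<cdot>\<^sub>m 1\<^sub>m n) cs (0\<^sub>m n n) \<in> carrier_mat n n" for cs
    using A by (induct cs) auto
  then show ?thesis using A by (simp add: poly_mat_def)
qed

lemma poly_mat_dim [simp]: "dim_row (poly_mat p A) = n" "dim_col (poly_mat p A) = n"
  by (meson carrier_matD poly_mat_carrier)+

lemma poly_mat_0 [simp]: "poly_mat 0 A = 0\<^sub>m n n"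
  using A by (simp add: poly_mat_def)

lemma poly_mat_pCons: "poly_mat (pCons c p) A = poly_mat p A * A + c \<cdot>\<^sub>m 1\<^sub>m n"
proof (cases "p = 0 \<and> c = 0")
  case True
  then show ?thesis using A by (intro eq_matI) auto
next
  case False
  then have "coeffs (pCons c p) = c # coeffs p" by (auto simp: cCons_def)
  then show ?thesis using A by (simp add: poly_mat_def)
qed

lemma poly_mat_add: "poly_mat (p + q) A = poly_mat p A + poly_mat q A"
proof (induct p arbitrary: q rule: pCons_induct)
  case (pCons a p)
  obtain b q' where q: "q = pCons b q'" by (cases q)
  have "poly_mat p A \<in> carrier_mat n n" "poly_mat q' A \<in> carrier_mat n n" by simp_all
  then show ?case using pCons(2) A
    by (simp add: q poly_mat_pCons add_mult_distrib_mat[of _ n n _ _ n]) (intro eq_matI, auto)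
qed (use A in simp)

lemma poly_mat_smult: "poly_mat (Polynomial.smult c p) A = c \<cdot>\<^sub>m poly_mat p A"
proof (induct p rule: pCons_induct)
  case (pCons a p)
  have "poly_mat p A \<in> carrier_mat n n" by simp
  with pCons(2) A show ?case
    by (simp add: poly_mat_pCons mult_smult_assoc_mat[of _ n n A n])
      (intro eq_matI, auto simp: algebra_simps)
qed (use A in \<open>intro eq_matI, auto\<close>)

lemma poly_mat_commute: "poly_mat p A * A = A * poly_mat p A"
proof (induct p rule: pCons_induct)
  case (pCons c p)
  have P: "poly_mat p A * A \<in> carrier_mat n n" using A by (simp add: mult_carrier_mat[of _ n n])
  have "poly_mat (pCons c p) A * A = (poly_mat p A * A) * A + (c \<cdot>\<^sub>m 1\<^sub>m n) * A"
    unfolding poly_mat_pCons by (rule add_mult_distrib_mat) (use A P in auto)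
  also have "\<dots> = A * (poly_mat p A * A) + A * (c \<cdot>\<^sub>m 1\<^sub>m n)"
    using pCons(2) A by (simp add: assoc_mult_mat[of _ n n _ n _ n]) (intro eq_matI, auto)
  also have "\<dots> = A * poly_mat (pCons c p) A"
    unfolding poly_mat_pCons by (rule mult_add_distrib_mat[symmetric]) (use A P in auto)
  finally show ?case .
qed (use A in simp)

lemma poly_mat_mult: "poly_mat (p * q) A = poly_mat p A * poly_mat q A"
proof (induct p rule: pCons_induct)
  case 0
  then show ?case using A by (intro eq_matI) auto
next
  case (pCons c p)
  have P: "poly_mat p A \<in> carrier_mat n n" and Q: "poly_mat q A \<in> carrier_mat n n" by simp_all
  have "poly_mat (pCons c p * q) A = poly_mat p A * poly_mat q A * A + c \<cdot>\<^sub>m poly_mat q A"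
    using pCons(2) A by (simp add: poly_mat_add poly_mat_smult poly_mat_pCons) (intro eq_matI, auto)
  also have "poly_mat p A * poly_mat q A * A = poly_mat p A * (A * poly_mat q A)"
    using A P Q by (simp add: assoc_mult_mat[of _ n n _ n _ n] poly_mat_commute)
  also have "\<dots> = (poly_mat p A * A) * poly_mat q A"
    using A P Q by (simp add: assoc_mult_mat[of _ n n _ n _ n])
  also have "c \<cdot>\<^sub>m poly_mat q A = (c \<cdot>\<^sub>m 1\<^sub>m n) * poly_mat q A"
    using Q by (simp add: mult_smult_assoc_mat[of _ n n _ n])
  also have "(poly_mat p A * A) * poly_mat q A + (c \<cdot>\<^sub>m 1\<^sub>m n) * poly_mat q A =
      poly_mat (pCons c p) A * poly_mat q A"
    unfolding poly_mat_pCons by (rule add_mult_distrib_mat[symmetric]) (use A Q in auto)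
  finally show ?case .
qed

end

lemma non_derogative_degree_annihilator_ge:
  fixes B :: "'a::field mat"
  assumes B: "B \<in> carrier_mat n n" and nd: "non_derogative B"
    and q: "poly_mat q B = 0\<^sub>m n n" "q \<noteq> 0"
  shows "n \<le> degree q"
proof -
  let ?I = "{q. poly_mat q B = 0\<^sub>m n n}"
  obtain m where m: "monic m" "m \<in> ?I" "\<And>q. q \<in> ?I \<Longrightarrow> m dvd q"
    using poly_ideal_monic_generator[of ?I q] q B
    by (auto simp: poly_mat_add poly_mat_mult right_mult_zero_mat[of _ n n])
  have "minimal_poly B = m"
    unfolding minimal_poly_def carrier_matD(1)[OF B]
  proof (rule the_equality)
    fix p assume "monic p \<and> poly_mat p B = 0\<^sub>m n n \<and> (\<forall>q. poly_mat q B = 0\<^sub>m n n \<longrightarrow> p dvd q)"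
    with m show "p = m" by (intro poly_dvd_antisym) auto
  qed (use m in auto)
  with nd have "char_poly B = m" by (simp add: non_derogative_def)
  with degree_monic_char_poly[OF B] have "degree m = n" by simp
  moreover have "degree m \<le> degree q" using m(3) q by (intro dvd_imp_degree_le) auto
  ultimately show ?thesis by simp
qed

section \<open>Local minimal polynomials and cyclic vectors\<close>

lemma add_eq_zero_vec_imp_uminus:
  fixes x y :: "'a::ab_group_add vec"
  assumes "x \<in> carrier_vec n" "y \<in> carrier_vec n" "x + y = 0\<^sub>v n"
  shows "y = - x"
proof (rule eq_vecI)
  fix i assume "i < dim_vec (- x)"
  then have i: "i < n" using assms by simp
  have "(x + y) $ i = 0" using assms(3) i by simp
  with i assms(1,2) show "y $ i = (- x) $ i" by (simp add: add_eq_0_iff)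
qed (use assms in auto)

definition poly_act :: "'a::comm_ring_1 mat \<Rightarrow> 'a poly \<Rightarrow> 'a vec \<Rightarrow> 'a vec" where
  "poly_act B p u = poly_mat p B *\<^sub>v u"

definition local_min_poly :: "'a::field mat \<Rightarrow> 'a vec \<Rightarrow> 'a poly \<Rightarrow> bool" where
  "local_min_poly B u m \<longleftrightarrow> monic m \<and> (\<forall>q. poly_act B q u = 0\<^sub>v (dim_row B) \<longleftrightarrow> m dvd q)"

lemma local_min_poly_monic: "local_min_poly B u m \<Longrightarrow> monic m"
  by (simp add: local_min_poly_def)

context
  fixes B :: "'a::field mat" and n :: nat
  assumes B: "B \<in> carrier_mat n n"
begin

lemma poly_act_carrier [simp]: "poly_act B p u \<in> carrier_vec n"
  using poly_mat_dim(1)[OF B] unfolding poly_act_def carrier_vec_def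
  by (simp only: dim_mult_mat_vec mem_Collect_eq)

lemma poly_act_dim [simp]: "dim_vec (poly_act B p u) = n"
  using poly_act_carrier[of p u] by (simp only: carrier_vec_def mem_Collect_eq)

lemma poly_act_add: "u \<in> carrier_vec n \<Longrightarrow> poly_act B (p + q) u = poly_act B p u + poly_act B q u"
  using B by (simp add: poly_act_def poly_mat_add add_mult_distrib_mat_vec[of _ n n])

lemma poly_act_mult: "u \<in> carrier_vec n \<Longrightarrow> poly_act B (p * q) u = poly_act B p (poly_act B q u)"
  using B by (simp add: poly_act_def poly_mat_mult assoc_mult_mat_vec[of _ n n _ n])

lemma poly_act_uminus:
  assumes "u \<in> carrier_vec n"
  shows "poly_act B (- p) u = - poly_act B p u"
proof -
  have "poly_mat (- p) B = - poly_mat p B"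
    using poly_mat_smult[OF B, of "-1" p] by (intro eq_matI) auto
  with assms B show ?thesis by (simp add: poly_act_def)
qed

lemma poly_act_vec_add:
  "u \<in> carrier_vec n \<Longrightarrow> v \<in> carrier_vec n \<Longrightarrow> poly_act B p (u + v) = poly_act B p u + poly_act B p v"
  using B by (simp add: poly_act_def mult_add_distrib_mat_vec[of _ n n])

lemma poly_act_0 [simp]: "u \<in> carrier_vec n \<Longrightarrow> poly_act B 0 u = 0\<^sub>v n"
  using B by (simp add: poly_act_def) (intro eq_vecI, auto)

lemma poly_act_zero_vec [simp]: "poly_act B p (0\<^sub>v n) = 0\<^sub>v n"
  using B by (simp add: poly_act_def) (intro eq_vecI, auto)

lemma poly_act_pCons:
  assumes u: "u \<in> carrier_vec n"
  shows "poly_act B (pCons c p) u = poly_act B p (B *\<^sub>v u) + c \<cdot>\<^sub>v u"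
proof -
  have P: "poly_mat p B \<in> carrier_mat n n" using B by simp
  have "poly_mat (pCons c p) B *\<^sub>v u = (poly_mat p B * B) *\<^sub>v u + (c \<cdot>\<^sub>m 1\<^sub>m n) *\<^sub>v u"
    unfolding poly_mat_pCons[OF B] using B P u by (intro add_mult_distrib_mat_vec) auto
  also have "\<dots> = poly_mat p B *\<^sub>v (B *\<^sub>v u) + c \<cdot>\<^sub>v u"
    using B P u by (simp add: assoc_mult_mat_vec[of _ n n _ n]) (intro eq_vecI, auto)
  finally show ?thesis by (simp add: poly_act_def)
qed

lemma poly_act_shift:
  "x \<in> carrier_vec n \<Longrightarrow> u \<in> carrier_vec n \<Longrightarrow>
    poly_act B f (x + poly_act B h u) = poly_act B f x + poly_act B (f * h) u"
  by (simp add: poly_act_vec_add poly_act_mult)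

lemma local_min_poly_exists:
  assumes u: "u \<in> carrier_vec n" and q: "q \<noteq> 0" "poly_act B q u = 0\<^sub>v n"
  shows "\<exists>m. local_min_poly B u m"
proof -
  let ?I = "{q. poly_act B q u = 0\<^sub>v n}"
  have "p + q \<in> ?I" if "p \<in> ?I" "q \<in> ?I" for p q
    using that u by (simp add: poly_act_add)
  moreover have "p * q \<in> ?I" if "q \<in> ?I" for p q
    using that u by (simp add: poly_act_mult)
  ultimately obtain m where m: "monic m" "m \<in> ?I" "\<And>q. q \<in> ?I \<Longrightarrow> m dvd q"
    using poly_ideal_monic_generator[of ?I q] q by blast
  have "poly_act B q u = 0\<^sub>v n \<longleftrightarrow> m dvd q" for q
  proof
    assume "m dvd q"
    then obtain k where "q = k * m" by (metis dvdE mult.commute)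
    with m(2) u show "poly_act B q u = 0\<^sub>v n" by (simp add: poly_act_mult)
  qed (use m(3) in simp)
  with m(1) B have "local_min_poly B u m" by (simp add: local_min_poly_def)
  then show ?thesis ..
qed

lemma local_min_poly_iff: "local_min_poly B u m \<Longrightarrow> poly_act B q u = 0\<^sub>v n \<longleftrightarrow> m dvd q"
  using B by (simp add: local_min_poly_def)

lemma local_min_poly_degree_le:
  "local_min_poly B u m \<Longrightarrow> q \<noteq> 0 \<Longrightarrow> poly_act B q u = 0\<^sub>v n \<Longrightarrow> degree m \<le> degree q"
  using local_min_poly_iff dvd_imp_degree_le by blast

lemma cyclic_conductor_exists:
  assumes w: "w \<in> carrier_vec n" and u: "u \<in> carrier_vec n" and c: "local_min_poly B w c"
  shows "\<exists>s g. monic s \<and> poly_act B s w = poly_act B g u \<and>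
    (\<forall>f g'. poly_act B f w = poly_act B g' u \<longrightarrow> s dvd f)"
proof -
  define C where "C = {f. \<exists>g. poly_act B f w = poly_act B g u}"
  have "p + q \<in> C" if "p \<in> C" "q \<in> C" for p q
  proof -
    from that obtain g1 g2 where "poly_act B p w = poly_act B g1 u" "poly_act B q w = poly_act B g2 u"
      by (auto simp: C_def)
    then have "poly_act B (p + q) w = poly_act B (g1 + g2) u" using w u by (simp add: poly_act_add)
    then show ?thesis by (auto simp: C_def)
  qed
  moreover have "p * q \<in> C" if "q \<in> C" for p q
  proof -
    from that obtain g where "poly_act B q w = poly_act B g u" by (auto simp: C_def)
    then have "poly_act B (p * q) w = poly_act B (p * g) u" using w u by (simp add: poly_act_mult)
    then show ?thesis by (auto simp: C_def)
  qed
  moreover have "poly_act B c w = poly_act B 0 u" using c u by (simp add: local_min_poly_iff)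
  then have "c \<in> C" "c \<noteq> 0" using local_min_poly_monic[OF c] by (auto simp: C_def)
  ultimately obtain s where "monic s" "s \<in> C" "\<And>f. f \<in> C \<Longrightarrow> s dvd f"
    using poly_ideal_monic_generator[of C c] by blast
  then show ?thesis by (auto simp: C_def)
qed

lemma cyclic_membership_shift:
  assumes w: "w \<in> carrier_vec n" and u: "u \<in> carrier_vec n"
  shows "(\<exists>g. poly_act B f (w + poly_act B h u) = poly_act B g u) \<longleftrightarrow>
    (\<exists>g. poly_act B f w = poly_act B g u)"
proof
  assume "\<exists>g. poly_act B f w = poly_act B g u"
  then obtain g where "poly_act B f w = poly_act B g u" ..
  then have "poly_act B f (w + poly_act B h u) = poly_act B (g + f * h) u"
    using w u by (simp add: poly_act_shift poly_act_add)
  then show "\<exists>g. poly_act B f (w + poly_act B h u) = poly_act B g u" ..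
next
  assume "\<exists>g. poly_act B f (w + poly_act B h u) = poly_act B g u"
  then obtain g where g: "poly_act B f (w + poly_act B h u) = poly_act B g u" ..
  define x where "x = w + poly_act B h u"
  have x: "x \<in> carrier_vec n" using w by (simp add: x_def)
  have "x + poly_act B (- h) u = w"
    using w u by (simp add: x_def poly_act_add[symmetric])
  then have "poly_act B f w = poly_act B f (x + poly_act B (- h) u)" by simp
  also have "\<dots> = poly_act B f x + poly_act B (f * - h) u" by (rule poly_act_shift[OF x u])
  also have "\<dots> = poly_act B (g + f * - h) u" using g by (simp only: x_def poly_act_add[OF u])
  finally show "\<exists>g. poly_act B f w = poly_act B g u" ..
qed

context
  fixes u m
  assumes local_min_polys_exist: "\<And>v. v \<in> carrier_vec n \<Longrightarrow> \<exists>c. local_min_poly B v c"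
    and u: "u \<in> carrier_vec n" and m: "local_min_poly B u m"
    and max: "\<And>v c. v \<in> carrier_vec n \<Longrightarrow> local_min_poly B v c \<Longrightarrow> degree c \<le> degree m"
begin

lemma conductor_remainder_eq_0:
  assumes w: "w \<in> carrier_vec n" and "s \<noteq> 0"
    and s_dvd: "\<And>f g. poly_act B f w = poly_act B g u \<Longrightarrow> s dvd f"
    and sw: "poly_act B s w = poly_act B r u" and r: "degree r < degree s \<or> r = 0"
  shows "r = 0"
proof (rule ccontr)
  assume "r \<noteq> 0"
  obtain a where a: "local_min_poly B w a" using local_min_polys_exist[OF w] ..
  then have "poly_act B a w = poly_act B 0 u" using u by (simp add: local_min_poly_iff)
  then obtain t where at: "a = s * t" using s_dvd by (blast elim: dvdE)
  have "t \<noteq> 0" using a at local_min_poly_monic[OF a] by auto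
  have "poly_act B (t * r) u = poly_act B t (poly_act B s w)"
    using u by (simp add: poly_act_mult sw)
  also have "\<dots> = poly_act B a w"
    using poly_act_mult[OF w, of t s] by (simp add: at mult.commute)
  also have "\<dots> = 0\<^sub>v n" using local_min_poly_iff[OF a, of a] by simp
  finally have "degree m \<le> degree (t * r)"
    using local_min_poly_degree_le[OF m] \<open>r \<noteq> 0\<close> \<open>t \<noteq> 0\<close> by simp
  also have "\<dots> = degree t + degree r" using \<open>r \<noteq> 0\<close> \<open>t \<noteq> 0\<close> by (simp add: degree_mult_eq)
  also have "\<dots> < degree t + degree s" using r \<open>r \<noteq> 0\<close> by simp
  also have "\<dots> = degree a" using at \<open>s \<noteq> 0\<close> \<open>t \<noteq> 0\<close> by (simp add: degree_mult_eq)
  also have "\<dots> \<le> degree m" by (rule max[OF w a])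
  finally show False by simp
qed

lemma shift_into_complement_of_cyclic:
  assumes w: "w \<in> carrier_vec n"
  shows "\<exists>h. \<forall>f. (\<exists>g. poly_act B f (w + poly_act B h u) = poly_act B g u) \<longrightarrow>
                poly_act B f (w + poly_act B h u) = 0\<^sub>v n"
proof -
  (* s generates the conductor of w into the cyclic subspace of u; maximality of deg m forces
     s to divide g, so shifting w by -(g div s)(B) u leaves a vector annihilated by s. *)
  obtain s g where s: "monic s" "poly_act B s w = poly_act B g u"
    and s_dvd: "\<And>f g'. poly_act B f w = poly_act B g' u \<Longrightarrow> s dvd f"
    using cyclic_conductor_exists[OF w u] local_min_polys_exist[OF w] by blast
  have "s \<noteq> 0" using s(1) by auto
  define h where "h = - (g div s)"
  define w' where "w' = w + poly_act B h u"
  have w': "w' \<in> carrier_vec n" using w by (simp add: w'_def)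
  have s_dvd': "s dvd f" if "poly_act B f w' = poly_act B g' u" for f g'
    using that s_dvd cyclic_membership_shift[OF w u, of f h] by (auto simp: w'_def)
  have "poly_act B s w' = poly_act B (g + s * h) u"
    using w u s(2) by (simp add: w'_def poly_act_shift poly_act_add)
  also have "g + s * h = g mod s"
    using minus_mult_div_eq_mod[of g s] by (simp add: h_def)
  finally have sw': "poly_act B s w' = poly_act B (g mod s) u" .
  moreover have "degree (g mod s) < degree s \<or> g mod s = 0"
    using degree_mod_less'[OF \<open>s \<noteq> 0\<close>, of g] by blast
  ultimately have "g mod s = 0"
    by (intro conductor_remainder_eq_0[OF w' \<open>s \<noteq> 0\<close>]) (auto intro: s_dvd')
  with sw' u have sw'0: "poly_act B s w' = 0\<^sub>v n" by simp
  have "poly_act B f w' = 0\<^sub>v n" if fw': "poly_act B f w' = poly_act B g' u" for f g'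
  proof -
    obtain k where "f = k * s" using s_dvd'[OF fw'] by (metis dvdE mult.commute)
    with w' sw'0 show ?thesis by (simp add: poly_act_mult)
  qed
  then show ?thesis unfolding w'_def by blast
qed

lemma max_local_min_poly_annihilates_complement:
  assumes w: "w \<in> carrier_vec n"
    and indep: "\<And>f g. poly_act B f w = poly_act B g u \<Longrightarrow> poly_act B f w = 0\<^sub>v n"
  shows "poly_act B m w = 0\<^sub>v n"
proof -
  obtain c where c: "local_min_poly B (u + w) c" using local_min_polys_exist[of "u + w"] u w by auto
  then have sum: "poly_act B c u + poly_act B c w = 0\<^sub>v n"
    using u w by (simp add: local_min_poly_iff poly_act_vec_add[symmetric])
  then have "poly_act B c w = poly_act B (- c) u"
    using u w add_eq_zero_vec_imp_uminus[OF poly_act_carrier poly_act_carrier sum]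
    by (simp add: poly_act_uminus)
  then have cw: "poly_act B c w = 0\<^sub>v n" by (rule indep)
  with sum u have "poly_act B c u = 0\<^sub>v n" by simp
  then have "m dvd c" using m by (simp add: local_min_poly_iff)
  moreover have "degree c \<le> degree m" using max[OF _ c] u w by simp
  ultimately have "m = c"
    using m c by (intro monic_dvd_degree_le_imp_eq) (auto simp: local_min_poly_monic)
  with cw show ?thesis by simp
qed

lemma max_local_min_poly_annihilates:
  assumes w: "w \<in> carrier_vec n"
  shows "poly_act B m w = 0\<^sub>v n"
proof -
  obtain h where h: "\<And>f g. poly_act B f (w + poly_act B h u) = poly_act B g u \<Longrightarrow>
      poly_act B f (w + poly_act B h u) = 0\<^sub>v n"
    using shift_into_complement_of_cyclic[OF w] by blast
  have "poly_act B m u = 0\<^sub>v n" using m by (simp add: local_min_poly_iff)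
  then have "poly_act B (m * h) u = 0\<^sub>v n" using u by (simp add: poly_act_mult mult.commute)
  then have "poly_act B m w = poly_act B m (w + poly_act B h u)"
    using w u by (simp add: poly_act_shift)
  also have "\<dots> = 0\<^sub>v n"
    using w u h by (intro max_local_min_poly_annihilates_complement) auto
  finally show ?thesis .
qed

end

lemma poly_act_Poly:
  assumes "u \<in> carrier_vec n" "i < n"
  shows "poly_act B (Poly xs) u $ i = (\<Sum>j<length xs. xs ! j * (B ^\<^sub>m j *\<^sub>v u) $ i)"
  using assms(1)
proof (induct xs arbitrary: u)
  case (Cons x xs)
  have Bu: "B *\<^sub>v u \<in> carrier_vec n" using B Cons.prems by simp
  have "poly_act B (Poly (x # xs)) u $ i = poly_act B (Poly xs) (B *\<^sub>v u) $ i + x * u $ i"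
    using Cons.prems B assms(2) by (simp add: poly_act_pCons)
  also have "poly_act B (Poly xs) (B *\<^sub>v u) $ i = (\<Sum>j<length xs. xs ! j * (B ^\<^sub>m Suc j *\<^sub>v u) $ i)"
    using Cons.hyps[OF Bu] B Cons.prems
    by (simp add: assoc_mult_mat_vec[of _ n n _ n] del: index_mult_mat_vec)
  also have "\<dots> + x * u $ i = (\<Sum>j<length (x # xs). (x # xs) ! j * (B ^\<^sub>m j *\<^sub>v u) $ i)"
    using B Cons.prems assms(2)
    by (simp only: length_Cons sum.lessThan_Suc_shift) (simp del: index_mult_mat_vec)
  finally show ?case .
qed (use assms(2) in simp)

end

section \<open>Krylov and companion matrices\<close>

lemma mult_mat_vec_unit_vec:
  "(A :: 'a::semiring_1 mat) \<in> carrier_mat nr n \<Longrightarrow> k < n \<Longrightarrow> A *\<^sub>v unit_vec n k = col A k"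
  by (intro eq_vecI) auto

lemma pow_mat_Suc_left:
  assumes A: "A \<in> carrier_mat n n"
  shows "A ^\<^sub>m Suc k = A * A ^\<^sub>m k"
proof (induct k)
  case (Suc k)
  have "A ^\<^sub>m Suc (Suc k) = A ^\<^sub>m Suc k * A" by simp
  also have "\<dots> = (A * A ^\<^sub>m k) * A" by (simp only: Suc)
  also have "\<dots> = A * A ^\<^sub>m Suc k" using A by (simp add: assoc_mult_mat[of _ n n _ n _ n])
  finally show ?case .
qed (use A in simp)

definition companion_mat :: "nat \<Rightarrow> 'a::zero_neq_one vec \<Rightarrow> 'a mat" where
  "companion_mat n c = mat n n (\<lambda>(i, j). if Suc j < n then (if i = Suc j then 1 else 0) else c $ i)"

lemma companion_mat_carrier [simp]: "companion_mat n c \<in> carrier_mat n n"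
  by (simp add: companion_mat_def)

definition krylov_mat :: "'a::semiring_1 mat \<Rightarrow> 'a vec \<Rightarrow> 'a mat" where
  "krylov_mat B u = mat (dim_row B) (dim_row B) (\<lambda>(i, j). (B ^\<^sub>m j *\<^sub>v u) $ i)"

context
  fixes B :: "'a::field mat" and n :: nat
  assumes B: "B \<in> carrier_mat n n"
begin

lemma krylov_mat_carrier [simp]: "krylov_mat B u \<in> carrier_mat n n"
  using B by (simp add: krylov_mat_def)

lemma col_krylov_mat: "u \<in> carrier_vec n \<Longrightarrow> j < n \<Longrightarrow> col (krylov_mat B u) j = B ^\<^sub>m j *\<^sub>v u"
  using B by (intro eq_vecI) (auto simp: krylov_mat_def)

lemma krylov_mat_mult_vec:
  assumes u: "u \<in> carrier_vec n" and v: "v \<in> carrier_vec n"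
  shows "krylov_mat B u *\<^sub>v v = poly_act B (Poly (list_of_vec v)) u"
proof (rule eq_vecI)
  fix i assume "i < dim_vec (poly_act B (Poly (list_of_vec v)) u)"
  with B have i: "i < n" by simp
  with B u v show "(krylov_mat B u *\<^sub>v v) $ i = poly_act B (Poly (list_of_vec v)) u $ i"
    by (simp add: poly_act_Poly krylov_mat_def scalar_prod_def atLeast0LessThan mult.commute)
qed (use B in \<open>simp add: krylov_mat_def\<close>)

lemma singular_krylov_mat_imp_annihilator:
  assumes u: "u \<in> carrier_vec n" and "det (krylov_mat B u) = 0"
  shows "\<exists>q. q \<noteq> 0 \<and> degree q < n \<and> poly_act B q u = 0\<^sub>v n"
proof -
  obtain v where v: "v \<in> carrier_vec n" "v \<noteq> 0\<^sub>v n" "krylov_mat B u *\<^sub>v v = 0\<^sub>v n"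
    using det_0_iff_vec_prod_zero[OF krylov_mat_carrier] assms by blast
  define q where "q = Poly (list_of_vec v)"
  have coeff_q: "coeff q j = (if j < n then v $ j else 0)" for j
    using v(1) by (simp add: q_def nth_default_def)
  have "q \<noteq> 0"
  proof
    assume "q = 0"
    then have "v $ j = 0" if "j < n" for j using coeff_q[of j] that by simp
    with v(1,2) show False by (auto intro!: eq_vecI)
  qed
  moreover have "degree q < n"
    using \<open>q \<noteq> 0\<close> coeff_q[of "degree q"] by (metis leading_coeff_0_iff)
  moreover have "poly_act B q u = 0\<^sub>v n"
    using krylov_mat_mult_vec[OF u v(1)] v(3) by (simp add: q_def)
  ultimately show ?thesis by blast
qed

lemma cyclic_vector_exists:
  assumes large: "\<And>q. poly_mat q B = 0\<^sub>m n n \<Longrightarrow> q \<noteq> 0 \<Longrightarrow> n \<le> degree q"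
  shows "\<exists>u \<in> carrier_vec n. det (krylov_mat B u) \<noteq> 0"
proof (rule ccontr)
  assume "\<not> ?thesis"
  then have small: "\<exists>q. q \<noteq> 0 \<and> degree q < n \<and> poly_act B q v = 0\<^sub>v n" if "v \<in> carrier_vec n" for v
    using singular_krylov_mat_imp_annihilator that by blast
  then have exist: "\<exists>c. local_min_poly B v c" if "v \<in> carrier_vec n" for v
    using local_min_poly_exists[OF B that] that by blast
  have small_degree: "degree c < n" if "v \<in> carrier_vec n" "local_min_poly B v c" for v c
    using small[OF that(1)] local_min_poly_degree_le[OF B that(2)] by fastforce
  obtain c0 where "local_min_poly B (0\<^sub>v n) c0" using exist[of "0\<^sub>v n"] by auto
  then have "\<exists>u m. (u \<in> carrier_vec n \<and> local_min_poly B u m) \<and>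
      (\<forall>v c. v \<in> carrier_vec n \<and> local_min_poly B v c \<longrightarrow> degree c \<le> degree m)"
    using ex_has_greatest_nat[of "\<lambda>(v, c). v \<in> carrier_vec n \<and> local_min_poly B v c" "(0\<^sub>v n, c0)"
        "\<lambda>(v, c). degree c" n] small_degree by fastforce
  then obtain u m where u: "u \<in> carrier_vec n" and m: "local_min_poly B u m"
    and max: "\<And>v c. v \<in> carrier_vec n \<Longrightarrow> local_min_poly B v c \<Longrightarrow> degree c \<le> degree m"
    by auto
  have "poly_mat m B = 0\<^sub>m n n"
  proof (rule eq_matI)
    fix i j assume ij: "i < dim_row (0\<^sub>m n n :: 'a mat)" "j < dim_col (0\<^sub>m n n :: 'a mat)"
    have "poly_act B m (unit_vec n j) = 0\<^sub>v n"
      using max_local_min_poly_annihilates[OF B exist u m max] by simp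
    moreover have "poly_mat m B $$ (i, j) = (poly_mat m B *\<^sub>v unit_vec n j) $ i"
      using ij B by simp
    ultimately show "poly_mat m B $$ (i, j) = 0\<^sub>m n n $$ (i, j)"
      using ij by (simp add: poly_act_def)
  qed (use B in auto)
  with large have "n \<le> degree m" using local_min_poly_monic[OF m] by fastforce
  with small_degree[OF u m] show False by simp
qed

lemma krylov_mat_intertwines_companion:
  assumes u: "u \<in> carrier_vec n" and c: "c \<in> carrier_vec n"
    and Kc: "krylov_mat B u *\<^sub>v c = B ^\<^sub>m n *\<^sub>v u"
  shows "B * krylov_mat B u = krylov_mat B u * companion_mat n c"
proof (rule mat_col_eqI)
  let ?K = "krylov_mat B u"
  fix j assume "j < dim_col (?K * companion_mat n c)"
  then have j: "j < n" by (simp add: companion_mat_def)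
  have "col (B * ?K) j = B *\<^sub>v (B ^\<^sub>m j *\<^sub>v u)"
    using col_mult2[OF B krylov_mat_carrier j] by (simp add: col_krylov_mat u j)
  also have "\<dots> = B ^\<^sub>m Suc j *\<^sub>v u"
    using B u by (simp add: pow_mat_Suc_left[OF B] assoc_mult_mat_vec[of _ n n _ n] del: pow_mat.simps)
  also have "\<dots> = ?K *\<^sub>v col (companion_mat n c) j"
  proof (cases "Suc j < n")
    case True
    then have "col (companion_mat n c) j = unit_vec n (Suc j)"
      by (intro eq_vecI) (auto simp: companion_mat_def)
    with True u show ?thesis
      by (simp add: mult_mat_vec_unit_vec[OF krylov_mat_carrier] col_krylov_mat del: pow_mat.simps)
  next
    case False
    with j have "Suc j = n" by simp
    moreover have "col (companion_mat n c) j = c"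
      using False j c by (intro eq_vecI) (auto simp: companion_mat_def)
    ultimately show ?thesis using Kc by simp
  qed
  also have "\<dots> = col (?K * companion_mat n c) j"
    using col_mult2[OF krylov_mat_carrier companion_mat_carrier j] ..
  finally show "col (B * ?K) j = col (?K * companion_mat n c) j" .
qed (use B in \<open>auto simp: krylov_mat_def companion_mat_def\<close>)

lemma krylov_mat_similar_companion:
  assumes u: "u \<in> carrier_vec n" and det: "det (krylov_mat B u) \<noteq> 0"
  shows "\<exists>c. similar_mat B (companion_mat n c)"
proof -
  let ?K = "krylov_mat B u"
  obtain Ki where Ki: "Ki \<in> carrier_mat n n" "Ki * ?K = 1\<^sub>m n"
    using det_non_zero_imp_unit[OF krylov_mat_carrier det, of "()"] by (auto simp: Units_def ring_mat_def)
  have KKi: "?K * Ki = 1\<^sub>m n" by (rule mat_mult_left_right_inverse[OF Ki(1) krylov_mat_carrier Ki(2)])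
  define c where "c = Ki *\<^sub>v (B ^\<^sub>m n *\<^sub>v u)"
  have Bnu: "B ^\<^sub>m n *\<^sub>v u \<in> carrier_vec n" by (rule mult_mat_vec_carrier[OF pow_carrier_mat[OF B] u])
  then have c: "c \<in> carrier_vec n" using Ki(1) by (simp add: c_def)
  have "?K *\<^sub>v c = (?K * Ki) *\<^sub>v (B ^\<^sub>m n *\<^sub>v u)"
    unfolding c_def by (rule assoc_mult_mat_vec[OF krylov_mat_carrier Ki(1) Bnu, symmetric])
  with KKi Bnu have "B * ?K = ?K * companion_mat n c"
    by (intro krylov_mat_intertwines_companion[OF u c]) simp
  then have "B = ?K * companion_mat n c * Ki"
    using B Ki(1) KKi by (simp add: assoc_mult_mat[of _ n n _ n _ n] flip: \<open>B * ?K = _\<close>)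
  with B Ki KKi have "similar_mat B (companion_mat n c)"
    by (intro similar_matI[of _ _ _ _ n]) (auto simp: companion_mat_def)
  then show ?thesis ..
qed

lemma non_derogative_similar_companion:
  assumes "non_derogative B"
  shows "\<exists>c. similar_mat B (companion_mat n c)"
  using cyclic_vector_exists[OF non_derogative_degree_annihilator_ge[OF B assms]]
    krylov_mat_similar_companion by blast

end

lemma mat_trace_mult_comm:
  fixes A :: "'a::comm_ring_1 mat"
  assumes A: "A \<in> carrier_mat n m" and B: "B \<in> carrier_mat m n"
  shows "mat_trace (A * B) = mat_trace (B * A)"
proof -
  have "mat_trace (A * B) = (\<Sum>i<n. \<Sum>k<m. A $$ (i, k) * B $$ (k, i))"
    using A B by (simp add: mat_trace_def scalar_prod_def atLeast0LessThan)
  also have "\<dots> = (\<Sum>k<m. \<Sum>i<n. B $$ (k, i) * A $$ (i, k))"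
    by (subst sum.swap) (simp add: mult.commute)
  also have "\<dots> = mat_trace (B * A)"
    using A B by (simp add: mat_trace_def scalar_prod_def atLeast0LessThan)
  finally show ?thesis .
qed

lemma mat_trace_similar:
  fixes A :: "'a::comm_ring_1 mat"
  assumes "similar_mat A B"
  shows "mat_trace A = mat_trace B"
proof -
  obtain n P Q where carr: "{A, B, P, Q} \<subseteq> carrier_mat n n"
    and QP: "Q * P = 1\<^sub>m n" and A: "A = P * B * Q"
    using similar_matD[OF assms] by blast
  then have B: "B \<in> carrier_mat n n" and P: "P \<in> carrier_mat n n" and Q: "Q \<in> carrier_mat n n"
    by auto
  have "mat_trace A = mat_trace (P * (B * Q))"
    using B P Q by (simp add: A assoc_mult_mat[of _ n n _ n _ n])
  also have "\<dots> = mat_trace ((B * Q) * P)" using B P Q by (intro mat_trace_mult_comm) auto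
  also have "\<dots> = mat_trace B" using B P Q QP by (simp add: assoc_mult_mat[of _ n n _ n _ n])
  finally show ?thesis .
qed

lemma mat_trace_companion_mat:
  assumes "0 < n"
  shows "mat_trace (companion_mat n c) = c $ (n - 1)"
proof -
  obtain m where "n = Suc m" using assms by (cases n) auto
  then show ?thesis by (simp add: mat_trace_def companion_mat_def)
qed

lemma similar_mat_square_zero_split:
  assumes sim: "similar_mat B (N + D)"
    and N: "N \<in> carrier_mat n n" and D: "D \<in> carrier_mat n n" and NN: "N * N = 0\<^sub>m n n"
  shows "\<exists>N' D'. N' \<in> carrier_mat n n \<and> D' \<in> carrier_mat n n \<and> B = N' + D' \<and>
    N' * N' = 0\<^sub>m n n \<and> similar_mat D' D"
proof -
  obtain n' P Q where carr: "{B, N + D, P, Q} \<subseteq> carrier_mat n' n'"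
    and PQ: "P * Q = 1\<^sub>m n'" and QP: "Q * P = 1\<^sub>m n'" and B: "B = P * (N + D) * Q"
    using similar_matD[OF sim] by blast
  have "N + D \<in> carrier_mat n' n'" using carr by blast
  then have "n' = n" using D by (metis carrier_matD(1) index_add_mat(2))
  then have P: "P \<in> carrier_mat n n" and Q: "Q \<in> carrier_mat n n"
    and PQ: "P * Q = 1\<^sub>m n" and QP: "Q * P = 1\<^sub>m n"
    using carr PQ QP by simp_all
  have QP_cancel: "Q * (P * X) = X" if "X \<in> carrier_mat n n" for X
    using that P Q QP by (simp add: assoc_mult_mat[of Q n n P n X n, symmetric])
  have NN_zero: "N * (N * X) = 0\<^sub>m n n" if "X \<in> carrier_mat n n" for X
    using that N NN by (simp add: assoc_mult_mat[of N n n N n X n, symmetric])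
  note [simp] = assoc_mult_mat[of _ n n _ n _ n]
  have "B = P * (N * Q + D * Q)" using N D P Q by (simp add: B add_mult_distrib_mat[of _ n n])
  then have "B = P * N * Q + P * D * Q"
    using mult_add_distrib_mat[OF P mult_carrier_mat[OF N Q] mult_carrier_mat[OF D Q]] N D P Q
    by simp
  moreover have "P * N * Q * (P * N * Q) = 0\<^sub>m n n"
    using N P Q by (simp add: QP_cancel NN_zero)
  moreover have "similar_mat (P * D * Q) D"
    using P Q D PQ QP by (intro similar_matI[of _ _ P Q n]) auto
  ultimately show ?thesis using N D P Q by (intro exI[of _ "P * N * Q"] exI[of _ "P * D * Q"]) auto
qed

lemma diagonalizable_if_similar_diagonal:
  assumes "similar_mat D L" "diagonal_mat L"
  shows "diagonalizable D"
proof -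
  obtain n P Q where carr: "{D, L, P, Q} \<subseteq> carrier_mat n n"
    and PQ: "P * Q = 1\<^sub>m n" and QP: "Q * P = 1\<^sub>m n" and D: "D = P * L * Q"
    using similar_matD[OF assms(1)] by blast
  then have L: "L \<in> carrier_mat n n" and P: "P \<in> carrier_mat n n" and Q: "Q \<in> carrier_mat n n"
    by auto
  have "Q * D * P = (Q * P) * L * (Q * P)" using L P Q by (simp add: D assoc_mult_mat[of _ n n _ n _ n])
  with L QP have "Q * D * P = L" by simp
  with carr PQ QP assms(2) show ?thesis unfolding diagonalizable_def by auto
qed

lemma eigenvalue_similar_iff:
  fixes A :: "'a::field mat"
  assumes "similar_mat A B"
  shows "eigenvalue A x \<longleftrightarrow> eigenvalue B x"
proof -
  obtain n P Q where "{A, B, P, Q} \<subseteq> carrier_mat n n"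
    using similar_matD[OF assms] by blast
  then show ?thesis
    by (simp add: eigenvalue_root_char_poly[of _ n] char_poly_similar[OF assms])
qed

lemma eigenvalue_mat_diag:
  fixes f :: "nat \<Rightarrow> 'a::field"
  shows "eigenvalue (mat_diag n f) x \<longleftrightarrow> x \<in> f ` {..<n}"
proof -
  have "upper_triangular (mat_diag n f)" by (simp add: upper_triangular_def mat_diag_def)
  moreover have "diag_mat (mat_diag n f) = map f [0..<n]"
    by (intro nth_equalityI) (auto simp: diag_mat_def mat_diag_def)
  ultimately have "char_poly (mat_diag n f) = (\<Prod>a\<leftarrow>map f [0..<n]. [:- a, 1:])"
    by (simp add: char_poly_upper_triangular[of _ n])
  then show ?thesis
    by (auto simp: eigenvalue_root_char_poly[OF mat_diag_dim] poly_prod_list prod_list_zero_iff)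
qed

lemma eigenvalue_mat_diag_nth:
  fixes xs :: "'a::field list"
  shows "length xs = n \<Longrightarrow> eigenvalue (mat_diag n ((!) xs)) x \<longleftrightarrow> x \<in> set xs"
  by (auto simp: eigenvalue_mat_diag in_set_conv_nth)

(* Allowing P * Q to be a nonzero multiple of the identity keeps the explicit inverses below
   polynomial in their parameters. *)
lemma similar_mat_if_intertwined:
  fixes A :: "'a::field mat"
  assumes carr: "A \<in> carrier_mat n n" "B \<in> carrier_mat n n" "P \<in> carrier_mat n n" "Q \<in> carrier_mat n n"
    and PQ: "P * Q = k \<cdot>\<^sub>m 1\<^sub>m n" and k: "k \<noteq> 0" and AP: "A * P = P * B"
  shows "similar_mat A B"
proof -
  define Q' where "Q' = inverse k \<cdot>\<^sub>m Q"
  have Q': "Q' \<in> carrier_mat n n" using carr by (simp add: Q'_def)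
  have PQ': "P * Q' = 1\<^sub>m n"
    using carr PQ k by (simp add: Q'_def mult_smult_distrib[of _ n n _ n]) (intro eq_matI, auto)
  have "A = (A * P) * Q'" using carr Q' PQ' by (simp add: assoc_mult_mat[of _ n n _ n _ n])
  then have "A = P * B * Q'" by (simp add: AP)
  with carr Q' PQ' mat_mult_left_right_inverse[OF carr(3) Q' PQ'] show ?thesis
    by (intro similar_matI[of _ _ P Q' n]) auto
qed

lemma square_zero_plus_diagonalizable_if_similar:
  assumes "similar_mat B C"
    and "\<exists>N D. N \<in> carrier_mat n n \<and> D \<in> carrier_mat n n \<and> N * N = 0\<^sub>m n n \<and>
      similar_mat C (N + D) \<and> similar_mat D (mat_diag n ((!) xs))"
    and xs: "length xs = n"
  shows "\<exists>N D. N \<in> carrier_mat n n \<and> D \<in> carrier_mat n n \<and> B = N + D \<and> N * N = 0\<^sub>m n n \<and>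
    diagonalizable D \<and> {x. eigenvalue D x} = set xs"
proof -
  obtain N D where N: "N \<in> carrier_mat n n" and D: "D \<in> carrier_mat n n" and NN: "N * N = 0\<^sub>m n n"
    and CND: "similar_mat C (N + D)" and DL: "similar_mat D (mat_diag n ((!) xs))"
    using assms(2) by blast
  obtain N' D' where split: "N' \<in> carrier_mat n n" "D' \<in> carrier_mat n n" "B = N' + D'"
      "N' * N' = 0\<^sub>m n n" and D': "similar_mat D' D"
    using similar_mat_square_zero_split[OF similar_mat_trans[OF assms(1) CND] N D NN] by blast
  have sim_diag: "similar_mat D' (mat_diag n ((!) xs))" by (rule similar_mat_trans[OF D' DL])
  have "diagonal_mat (mat_diag n ((!) xs))" by (simp add: diagonal_mat_def mat_diag_def)
  with sim_diag have "diagonalizable D'" by (rule diagonalizable_if_similar_diagonal)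
  moreover have "{x. eigenvalue D' x} = set xs"
    using eigenvalue_similar_iff[OF sim_diag] eigenvalue_mat_diag_nth[OF xs] by auto
  ultimately show ?thesis using split by blast
qed

section \<open>Explicit splittings of 4 x 4 companion matrices in characteristic 2\<close>

lemma less_4_cases: "(i::nat) < 4 \<longleftrightarrow> i = 0 \<or> i = 1 \<or> i = 2 \<or> i = 3" by auto

lemma sum_lessThan_4: "(\<Sum>k<4::nat. f k) = f 0 + f 1 + f 2 + (f 3 :: 'a::comm_monoid_add)"
  by (simp add: eval_nat_numeral)

lemma mat_of_rows_list_4_mult_index:
  assumes "length X = 4" "length Y = 4" "i < 4" "j < 4" 
  shows "(mat_of_rows_list 4 X * mat_of_rows_list 4 Y) $$ (i, j) =
    X ! i ! 0 * Y ! 0 ! j + X ! i ! 1 * Y ! 1 ! j + X ! i ! 2 * Y ! 2 ! j +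
     X ! i ! 3 * (Y ! 3 ! j :: 'a::semiring_0)"
  using assms by (simp add: mat_of_rows_list_def scalar_prod_def atLeast0LessThan sum_lessThan_4)

lemma mat_of_rows_list_dim [simp]:
  "dim_row (mat_of_rows_list m X) = length X" "dim_col (mat_of_rows_list m X) = m"
  by (simp_all add: mat_of_rows_list_def)

lemma mat_of_rows_list_index [simp]:
  "i < length X \<Longrightarrow> j < m \<Longrightarrow> mat_of_rows_list m X $$ (i, j) = X ! i ! j"
  by (simp add: mat_of_rows_list_def)

lemma mat_of_rows_list_carrier: "length X = n \<Longrightarrow> mat_of_rows_list m X \<in> carrier_mat n m"
  by (simp add: mat_of_rows_list_def)

lemma eq_mat_4I: "dim_row A = 4 \<Longrightarrow> dim_col A = 4 \<Longrightarrow> B \<in> carrier_mat 4 4 \<Longrightarrow>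
  (\<And>i j. i < 4 \<Longrightarrow> j < 4 \<Longrightarrow> A $$ (i, j) = B $$ (i, j)) \<Longrightarrow> A = B"
  by (intro eq_matI) auto

lemma char_2_simps:
  fixes x y :: "'a::field"
  assumes "(2::'a) = 0"
  shows "x + x = 0" "x + (x + y) = y"
proof -
  show "x + x = 0" using assms by (metis mult_2 mult_zero_left)
  then show "x + (x + y) = y" by (simp add: add.assoc[symmetric])
qed

lemma companion_mat_4:
  "companion_mat 4 c =
    mat_of_rows_list 4 [[0, 0, 0, c $ 0], [1, 0, 0, c $ 1], [0, 1, 0, c $ 2], [0, 0, 1, c $ 3]]"
  by (rule eq_mat_4I) (auto simp: companion_mat_def less_4_cases numeral_2_eq_2[symmetric])

lemma quartic_companion_similar_diag:
  fixes a :: "'a::field"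
  assumes two: "(2::'a) = 0" and a: "a \<noteq> 0" "a \<noteq> 1"
  shows "similar_mat
    (mat_of_rows_list 4 [[0, 0, 0, 0], [1, 0, 0, a * (a + 1)], [0, 1, 0, 1 + a * (a + 1)], [0, 0, 1, 0]])
    (mat_diag 4 ((!) [0, 1, a, a + 1]))" (is "similar_mat ?D _")
proof -
  (* ?D is the companion matrix of x (x + 1) (x + a) (x + a + 1) = x^4 + (1 + ab) x^2 + ab x.
     The rows (1, t, t^2, t^3) of V, for t = 0, 1, a, a + 1, are left eigenvectors of ?D, and
     W = ab V^-1. *)
  define ab where "ab = a * (a + 1)"
  have "a + 1 \<noteq> 0" using a(2) char_2_simps(2)[OF two, of 1 a] by (metis add.commute add_0_right)
  with a(1) have ab: "ab \<noteq> 0" by (simp add: ab_def)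
  define V where "V = mat_of_rows_list 4 [[1, 0, 0, 0], [1, 1, 1, 1], [1, a, a^2, a^3],
    [1, a + 1, (a + 1)^2, (a + 1)^3]]"
  define W where "W = mat_of_rows_list 4
    [[ab, 0, 0, 0], [ab + 1, ab, a + 1, a], [0, 1, a, a + 1], [1, 1, 1, 1]]"
  define L where "L = mat_of_rows_list 4 [[0, 0, 0, 0], [0, 1, 0, 0], [0, 0, a, 0], [0, 0, 0, a + 1]]"
  have carr: "?D \<in> carrier_mat 4 4" "V \<in> carrier_mat 4 4" "W \<in> carrier_mat 4 4" "L \<in> carrier_mat 4 4"
    unfolding V_def W_def L_def by (simp_all add: mat_of_rows_list_carrier)
  have "V * W = ab \<cdot>\<^sub>m 1\<^sub>m 4"
    unfolding V_def W_def ab_def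
    by (rule eq_mat_4I) (auto simp: mat_of_rows_list_4_mult_index less_4_cases ring_distribs
        power2_eq_square power3_eq_cube add_ac mult_ac char_2_simps[OF two] simp del: index_mult_mat(1))
  moreover have "L * V = V * ?D"
    unfolding L_def V_def
    by (rule eq_mat_4I) (auto simp: mat_of_rows_list_4_mult_index less_4_cases ring_distribs
        power2_eq_square power3_eq_cube add_ac mult_ac char_2_simps[OF two] simp del: index_mult_mat(1))
  ultimately have "similar_mat ?D L"
    by (rule similar_mat_sym[OF similar_mat_if_intertwined[OF carr(4,1,2,3) _ ab]])
  moreover have "mat_diag 4 ((!) [0, 1, a, a + 1]) = L"
    unfolding L_def by (rule eq_mat_4I) (auto simp: mat_diag_def less_4_cases)
  ultimately show ?thesis by simp
qed

lemma companion_square_zero_split_trace_zero: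
  fixes a :: "'a::field" and c :: "'a vec"
  assumes two: "(2::'a) = 0" and a: "a \<noteq> 0" "a \<noteq> 1" and c3: "c $ 3 = 0"
  shows "\<exists>N D. N \<in> carrier_mat 4 4 \<and> D \<in> carrier_mat 4 4 \<and> N * N = 0\<^sub>m 4 4 \<and>
    similar_mat (companion_mat 4 c) (N + D) \<and> similar_mat D (mat_diag 4 ((!) [0, 1, a, a + 1]))"
proof -
  define ab where "ab = a * (a + 1)"
  define N where "N = mat_of_rows_list 4
    [[0, 0, 0, c $ 0], [0, 0, 0, c $ 1 - ab], [0, 0, 0, c $ 2 - (1 + ab)], [0, 0, 0, 0]]"
  define D where "D = mat_of_rows_list 4 [[0, 0, 0, 0], [1, 0, 0, ab], [0, 1, 0, 1 + ab], [0, 0, 1, 0]]"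
  have carr: "N \<in> carrier_mat 4 4" "D \<in> carrier_mat 4 4"
    unfolding N_def D_def by (simp_all add: mat_of_rows_list_carrier)
  have "companion_mat 4 c = N + D"
    unfolding companion_mat_4 N_def D_def by (rule eq_mat_4I) (auto simp: less_4_cases c3)
  then have "similar_mat (companion_mat 4 c) (N + D)" using carr by (simp add: similar_mat_refl[of _ 4])
  moreover have "N * N = 0\<^sub>m 4 4"
    unfolding N_def
    by (rule eq_mat_4I) (auto simp: mat_of_rows_list_4_mult_index less_4_cases simp del: index_mult_mat(1))
  moreover have "similar_mat D (mat_diag 4 ((!) [0, 1, a, a + 1]))"
    unfolding D_def ab_def by (rule quartic_companion_similar_diag[OF two a])
  ultimately show ?thesis using carr by blast
qed

lemma rank_two_similar_diag:
  fixes a b k :: "'a::field"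
  assumes two: "(2::'a) = 0" and "a \<noteq> 0" "b \<noteq> 0" "a \<noteq> b"
  shows "similar_mat (mat_of_rows_list 4 [[0, 0, 0, 0], [0, 0, 0, 0], [1, 0, a, k], [0, 1, 0, b]])
    (mat_diag 4 ((!) [0, 0, a, b]))" (is "similar_mat ?D _")
proof -
  (* The columns of E are eigenvectors of ?D for 0, 0, a, b, and E' = a b u E^-1. *)
  define u where "u = a + b"
  have "u \<noteq> 0" using assms char_2_simps(2)[OF two, of a b] by (metis u_def add_0_right)
  with assms have abu: "a * b * u \<noteq> 0" by simp
  define E where "E = mat_of_rows_list 4 [[a, k, 0, 0], [0, b, 0, 0], [1, 0, 1, k], [0, 1, 0, u]]"
  define E' where "E' = mat_of_rows_list 4 [[b * u, - (k * u), 0, 0], [0, a * u, 0, 0],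
    [- (b * u), k * u + a * k, a * b * u, - (a * b * k)], [0, - a, 0, a * b]]"
  define L where "L = mat_of_rows_list 4 [[0, 0, 0, 0], [0, 0, 0, 0], [0, 0, a, 0], [0, 0, 0, b]]"
  have carr: "?D \<in> carrier_mat 4 4" "E \<in> carrier_mat 4 4" "E' \<in> carrier_mat 4 4" "L \<in> carrier_mat 4 4"
    unfolding E_def E'_def L_def by (simp_all add: mat_of_rows_list_carrier)
  have "E * E' = (a * b * u) \<cdot>\<^sub>m 1\<^sub>m 4"
    unfolding E_def E'_def
    by (rule eq_mat_4I) (auto simp: mat_of_rows_list_4_mult_index less_4_cases ring_distribs
        add_ac mult_ac simp del: index_mult_mat(1))
  moreover have "?D * E = E * L"
    unfolding E_def L_def u_def
    by (rule eq_mat_4I) (auto simp: mat_of_rows_list_4_mult_index less_4_cases ring_distribs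
        add_ac mult_ac char_2_simps[OF two] simp del: index_mult_mat(1))
  ultimately have "similar_mat ?D L" by (rule similar_mat_if_intertwined[OF carr(1,4,2,3) _ abu])
  moreover have "mat_diag 4 ((!) [0, 0, a, b]) = L"
    unfolding L_def by (rule eq_mat_4I) (auto simp: mat_diag_def less_4_cases)
  ultimately show ?thesis by simp
qed

lemma companion_square_zero_split_trace_nonzero:
  fixes a :: "'a::field" and c :: "'a vec"
  assumes two: "(2::'a) = 0" and u: "c $ 3 \<noteq> 0" and a: "a \<noteq> 0" "a \<noteq> c $ 3"
  shows "\<exists>N D. N \<in> carrier_mat 4 4 \<and> D \<in> carrier_mat 4 4 \<and> N * N = 0\<^sub>m 4 4 \<and>
    similar_mat (companion_mat 4 c) (N + D) \<and> similar_mat D (mat_diag 4 ((!) [0, 0, a, c $ 3 + a]))"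
proof -
  (* Q' = Q^-1 conjugates C into N + D, and N maps everything into span(e_0, e_1), which it kills. *)
  define b where "b = c $ 3 + a"
  define d where "d = c $ 2 + a * b"
  define k where "k = c $ 1 + a * d"
  have "b \<noteq> 0" using a(2) char_2_simps(2)[OF two, of "c $ 3" a] by (metis b_def add_0_right)
  have "a \<noteq> b" using u by (auto simp: b_def)
  define Q where "Q = mat_of_rows_list 4 [[1, 0, 0, 0], [0, a, 1, 0], [0, 1, 0, a], [0, 0, 0, 1]]"
  define Q' where "Q' = mat_of_rows_list 4 [[1, 0, 0, 0], [0, 0, 1, a], [0, 1, a, a * a], [0, 0, 0, 1]]"
  define N where "N = mat_of_rows_list 4 [[0, 0, 0, c $ 0], [0, 0, 1, d], [0, 0, 0, 0], [0, 0, 0, 0]]"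
  define D where "D = mat_of_rows_list 4 [[0, 0, 0, 0], [0, 0, 0, 0], [1, 0, a, k], [0, 1, 0, b]]"
  have carr: "Q \<in> carrier_mat 4 4" "Q' \<in> carrier_mat 4 4" "N \<in> carrier_mat 4 4" "D \<in> carrier_mat 4 4"
    unfolding Q_def Q'_def N_def D_def by (simp_all add: mat_of_rows_list_carrier)
  have ND: "N + D = mat_of_rows_list 4 [[0, 0, 0, c $ 0], [0, 0, 1, d], [1, 0, a, k], [0, 1, 0, b]]"
    unfolding N_def D_def by (rule eq_mat_4I) (auto simp: less_4_cases)
  have "Q * Q' = 1 \<cdot>\<^sub>m 1\<^sub>m 4"
    unfolding Q_def Q'_def
    by (rule eq_mat_4I) (auto simp: mat_of_rows_list_4_mult_index less_4_cases ring_distribs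
        add_ac mult_ac char_2_simps[OF two] simp del: index_mult_mat(1))
  moreover have "companion_mat 4 c * Q = Q * (N + D)"
    unfolding companion_mat_4 ND Q_def
    by (rule eq_mat_4I) (auto simp: mat_of_rows_list_4_mult_index less_4_cases ring_distribs
        add_ac mult_ac char_2_simps[OF two] b_def d_def k_def simp del: index_mult_mat(1))
  ultimately have "similar_mat (companion_mat 4 c) (N + D)"
    using carr by (intro similar_mat_if_intertwined[of _ 4 _ Q Q' 1]) auto
  moreover have "N * N = 0\<^sub>m 4 4"
    unfolding N_def
    by (rule eq_mat_4I) (auto simp: mat_of_rows_list_4_mult_index less_4_cases simp del: index_mult_mat(1))
  moreover have "similar_mat D (mat_diag 4 ((!) [0, 0, a, c $ 3 + a]))"
    unfolding D_def b_def[symmetric] using rank_two_similar_diag[OF two a(1) \<open>b \<noteq> 0\<close> \<open>a \<noteq> b\<close>] .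
  ultimately show ?thesis using carr by blast
qed

theorem proposition2p5:
  fixes B :: "'a :: field mat"
  assumes char2: "CHAR('a) = 2"
    and card4: "infinite (UNIV :: 'a set) \<or> card (UNIV :: 'a set) \<ge> 4"
    and B4: "B \<in> carrier_mat 4 4"
    and nd: "non_derogative B"
  shows "(\<forall>u3 a. mat_trace B = u3 \<longrightarrow> u3 \<noteq> 0 \<longrightarrow> a \<noteq> 0 \<longrightarrow> a \<noteq> u3 \<longrightarrow>
           (\<exists>N D. N \<in> carrier_mat 4 4 \<and> D \<in> carrier_mat 4 4 \<and> B = N + D \<and>
              N * N = 0\<^sub>m 4 4 \<and> diagonalizable D \<and>
              (\<forall>x. eigenvalue D x \<longrightarrow> x \<in> {0, a, u3 + a})))
       \<and> (mat_trace B = 0 \<longrightarrow> (\<forall>a. a \<noteq> 0 \<longrightarrow> a \<noteq> 1 \<longrightarrow>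
           (\<exists>N D. N \<in> carrier_mat 4 4 \<and> D \<in> carrier_mat 4 4 \<and> B = N + D \<and>
              N * N = 0\<^sub>m 4 4 \<and> diagonalizable D \<and>
              {x. eigenvalue D x} = {0, 1, a, a + 1})))"
proof -
  have two: "(2::'a) = 0" using of_nat_CHAR[where 'a='a] char2 by simp
  obtain c where Bc: "similar_mat B (companion_mat 4 c)"
    using non_derogative_similar_companion[OF B4 nd] by blast
  have trace: "mat_trace B = c $ 3"
    using mat_trace_similar[OF Bc] mat_trace_companion_mat[of 4 c] by simp
  show ?thesis
    apply (intro conjI allI impI)
    subgoal for u3 a
      using square_zero_plus_diagonalizable_if_similar[OF Bc
          companion_square_zero_split_trace_nonzero[OF two, of c a]] trace
      by auto
    subgoal for a
      using square_zero_plus_diagonalizable_if_similar[OF Bc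
          companion_square_zero_split_trace_zero[OF two, of a c]] trace
      by auto
    done
qed

end
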